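(* Let $k\ge 2$ and let $G=G_n\langle t_1,\ldots,t_k\rangle$ be a Toeplitz graph with $n\ge t_{k-1}+t_k$. Then the following are equivalent: (i) $G$ is an interval graph; (ii) $G$ is chordal; (iii) $t_i=it_1$ for every $i\in[k]$; (iv) $\omega(G)=k+1$.
   Context: For integers $n\ge 2$, $k\ge 1$ and $1\le t_1<t_2<\cdots<t_k\le n-1$, the Toeplitz graph $G_n\langle t_1,\ldots,t_k\rangle$ is the simple graph with vertex set $[n]=\{1,\ldots,n\}$ in which two distinct vertices $i,j$ are adjacent if and only if $|i-j|\in\{t_1,\ldots,t_k\}$. A hole is an induced (chordless) cycle of length at least $4$; a graph is chordal if it has no hole. A graph is an interval graph if one can assign to each vertex $v$ a real interval $I_v$ such that distinct $u,v$ are adjacent iff $I_u\cap I_v\neq\emptyset$. $\omega(G)$ is the clique number. *)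

theory Defs
  imports "HOL-Analysis.Analysis"
begin

text \<open>Toeplitz graph G_n<t_1,...,t_k>: vertex set {1..n}; i, j adjacent iff
  |i - j| is one of t_1, ..., t_k.  The sequence t is indexed by 1..k.\<close>
definition toeplitz_adj :: "nat \<Rightarrow> (nat \<Rightarrow> nat) \<Rightarrow> nat \<Rightarrow> nat \<Rightarrow> bool" where
  "toeplitz_adj k t i j \<longleftrightarrow> i \<noteq> j \<and> (\<exists>l\<in>{1..k}. nat \<bar>int i - int j\<bar> = t l)"

definition toeplitz_params :: "nat \<Rightarrow> nat \<Rightarrow> (nat \<Rightarrow> nat) \<Rightarrow> bool" where
  "toeplitz_params n k t \<longleftrightarrow> n \<ge> 2 \<and> k \<ge> 1 \<and> 1 \<le> t 1 \<and> t k \<le> n - 1 \<and>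
     (\<forall>i j. 1 \<le> i \<longrightarrow> i < j \<longrightarrow> j \<le> k \<longrightarrow> t i < t j)"

text \<open>A hole: an induced cycle of length at least 4, given as a list of
  distinct vertices where two of them are adjacent iff they are cyclically consecutive.\<close>
definition has_hole :: "'a set \<Rightarrow> ('a \<Rightarrow> 'a \<Rightarrow> bool) \<Rightarrow> bool" where
  "has_hole V E \<longleftrightarrow> (\<exists>cs. length cs \<ge> 4 \<and> distinct cs \<and> set cs \<subseteq> V \<and>
     (\<forall>i<length cs. \<forall>j<length cs. i \<noteq> j \<longrightarrow>
        (E (cs ! i) (cs ! j) \<longleftrightarrow> (j = (i + 1) mod length cs \<or> i = (j + 1) mod length cs))))"

definition chordal :: "'a set \<Rightarrow> ('a \<Rightarrow> 'a \<Rightarrow> bool) \<Rightarrow> bool" where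
  "chordal V E \<longleftrightarrow> \<not> has_hole V E"

definition interval_graph :: "'a set \<Rightarrow> ('a \<Rightarrow> 'a \<Rightarrow> bool) \<Rightarrow> bool" where
  "interval_graph V E \<longleftrightarrow> (\<exists>I :: 'a \<Rightarrow> real set.
     (\<forall>v\<in>V. is_interval (I v) \<and> I v \<noteq> {}) \<and>
     (\<forall>u\<in>V. \<forall>v\<in>V. u \<noteq> v \<longrightarrow> (E u v \<longleftrightarrow> I u \<inter> I v \<noteq> {})))"

definition is_clique :: "'a set \<Rightarrow> ('a \<Rightarrow> 'a \<Rightarrow> bool) \<Rightarrow> 'a set \<Rightarrow> bool" where
  "is_clique V E C \<longleftrightarrow> C \<subseteq> V \<and> (\<forall>u\<in>C. \<forall>v\<in>C. u \<noteq> v \<longrightarrow> E u v)"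

definition clique_number :: "'a set \<Rightarrow> ('a \<Rightarrow> 'a \<Rightarrow> bool) \<Rightarrow> nat" where
  "clique_number V E = Max (card ` {C. is_clique V E C})"

end

theory Submission
  imports Defs
begin

(*
  An interval graph has no hole: for a hole v_0, ..., v_{L-1} with L >= 4, the intervals of v_0,
  v_1, v_2 and the union of the intervals of v_3, ..., v_{L-1} (again an interval) would meet
  exactly cyclically, which is impossible on the line.

  If t_i = i t_1, two vertices are adjacent iff they are congruent mod t_1 and their quotients by
  t_1 differ by at most k; placing the residue classes far apart on the line turns this into a
  unit-interval representation.  Otherwise there is a hole: either some distances p < q have
  neither p + q nor q - p among the distances, giving the 4-hole 1, 1+p, 1+p+q, 1+q, or the
  distances are closed under these operations, which forces k <= 3, and t_3 = t_1 + t_2 if k = 3.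
  Then only t_1 and t_2 occur below t_1 + t_2, and the points i t_1 mod (t_1 + t_2) + 1 form a
  hole of length (t_1 + t_2) / gcd t_1 t_2 >= 4.

  Finally, the differences between the vertices of a clique and its least vertex are distinct
  distances, so the clique number is at most k + 1; equality forces the distances to be closed
  under differences, which makes them arithmetic, and conversely 1, 1 + t_1, ..., 1 + k t_1 is a
  clique.
*)

section \<open>Toeplitz graphs\<close>

lemma toeplitz_adj_nat_abs_iff:
  "toeplitz_adj k t u v \<longleftrightarrow> u \<noteq> v \<and> nat \<bar>int u - int v\<bar> \<in> t ` {1..k}"
  unfolding toeplitz_adj_def image_iff by simp

lemma toeplitz_adj_iff:
  "toeplitz_adj k t u v \<longleftrightarrow> u \<noteq> v \<and> (if u \<le> v then v - u else u - v) \<in> t ` {1..k}"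
proof -
  have "nat \<bar>int u - int v\<bar> = (if u \<le> v then v - u else u - v)"
    by auto
  then show ?thesis
    unfolding toeplitz_adj_def image_iff by simp
qed

lemma toeplitz_adj_commute: "toeplitz_adj k t u v \<longleftrightarrow> toeplitz_adj k t v u"
  unfolding toeplitz_adj_def by (auto simp: abs_minus_commute)

lemma toeplitz_params_strict_mono: "toeplitz_params n k t \<Longrightarrow> strict_mono_on {1..k} t"
  unfolding toeplitz_params_def strict_mono_on_def by auto

lemma dist_not_between:
  fixes t :: "nat \<Rightarrow> nat"
  assumes "strict_mono_on {1..k} t" "1 \<le> i" "i < k" "x \<in> t ` {1..k}"
  shows "x \<le> t i \<or> t (Suc i) \<le> x"
proof -
  obtain l where l: "l \<in> {1..k}" "x = t l"
    using assms(4) by blast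
  show ?thesis
  proof (cases "l \<le> i")
    case True
    then show ?thesis
      using l assms(2,3) strict_mono_on_leD[OF assms(1), of l i] by simp
  next
    case False
    then show ?thesis
      using l assms(2,3) strict_mono_on_leD[OF assms(1), of "Suc i" l] by simp
  qed
qed

lemma dist_ge_first:
  fixes t :: "nat \<Rightarrow> nat"
  assumes "strict_mono_on {1..k} t" "x \<in> t ` {1..k}"
  shows "t 1 \<le> x"
  using assms strict_mono_on_leD[OF assms(1), of 1] by auto

lemma dist_le_last:
  fixes t :: "nat \<Rightarrow> nat"
  assumes "strict_mono_on {1..k} t" "x \<in> t ` {1..k}"
  shows "x \<le> t k"
  using assms strict_mono_on_leD[OF assms(1), of _ k] by auto

lemma dist_less_last_imp_le:
  fixes t :: "nat \<Rightarrow> nat"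
  assumes "strict_mono_on {1..k} t" "x \<in> t ` {1..k}" "x < t k"
  shows "x \<le> t (k - 1)"
proof -
  obtain l where l: "l \<in> {1..k}" "x = t l"
    using assms(2) by blast
  with assms(3) have "l \<noteq> k"
    by auto
  with l have "l \<le> k - 1"
    by auto
  with l show ?thesis
    using strict_mono_on_leD[OF assms(1), of l "k - 1"] by simp
qed

lemma arith_of_const_steps:
  fixes t :: "nat \<Rightarrow> nat"
  assumes "\<And>j. 1 \<le> j \<Longrightarrow> j < k \<Longrightarrow> t (Suc j) = t j + t 1"
  shows "\<forall>i\<in>{1..k}. t i = i * t 1"
proof
  fix i assume "i \<in> {1..k}"
  then have "1 \<le> i" "i \<le> k" by simp_all
  then show "t i = i * t 1"
  proof (induction i rule: dec_induct)
    case base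
    then show ?case by simp
  next
    case (step j)
    then show ?case
      using assms[of j] by simp
  qed
qed

section \<open>Cliques\<close>

lemma is_cliqueD: "is_clique V E C \<Longrightarrow> u \<in> C \<Longrightarrow> v \<in> C \<Longrightarrow> u \<noteq> v \<Longrightarrow> E u v"
  unfolding is_clique_def by simp

lemma card_shift_Diff_Min:
  fixes C :: "nat set"
  assumes "finite C" "C \<noteq> {}"
  shows "card ((\<lambda>v. v - Min C) ` (C - {Min C})) = card C - 1"
proof -
  have "inj_on (\<lambda>v. v - Min C) C"
  proof (rule inj_onI)
    fix u v assume "u \<in> C" "v \<in> C" "u - Min C = v - Min C"
    moreover have "Min C \<le> u" "Min C \<le> v"
      using assms(1) \<open>u \<in> C\<close> \<open>v \<in> C\<close> by simp_all
    ultimately show "u = v"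
      by linarith
  qed
  then have "card ((\<lambda>v. v - Min C) ` (C - {Min C})) = card (C - {Min C})"
    by (meson Diff_subset card_image inj_on_subset)
  also have "\<dots> = card C - 1"
    using assms by (simp add: card_Diff_singleton)
  finally show ?thesis .
qed

lemma toeplitz_clique_shift_subset:
  assumes "is_clique V (toeplitz_adj k t) C" "finite C"
  shows "(\<lambda>v. v - Min C) ` (C - {Min C}) \<subseteq> t ` {1..k}"
proof
  fix x assume "x \<in> (\<lambda>v. v - Min C) ` (C - {Min C})"
  then obtain v where v: "v \<in> C" "v \<noteq> Min C" and x: "x = v - Min C"
    by blast
  have "C \<noteq> {}"
    using v(1) by blast
  with assms(2) have "Min C \<in> C"
    by (rule Min_in)
  then have "toeplitz_adj k t (Min C) v"
    using is_cliqueD[OF assms(1) _ v(1)] v(2) by simp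
  moreover have "Min C \<le> v"
    using assms(2) v(1) by simp
  ultimately show "x \<in> t ` {1..k}"
    using x by (simp add: toeplitz_adj_iff)
qed

lemma card_toeplitz_clique_le:
  assumes "is_clique V (toeplitz_adj k t) C" "finite C"
  shows "card C \<le> k + 1"
proof (cases "C = {}")
  case True
  then show ?thesis by simp
next
  case False
  have "card ((\<lambda>v. v - Min C) ` (C - {Min C})) \<le> card (t ` {1..k})"
    by (rule card_mono[OF finite_imageI[OF finite_atLeastAtMost]
          toeplitz_clique_shift_subset[OF assms]])
  also have "\<dots> \<le> card {1..k}"
    by (rule card_image_le[OF finite_atLeastAtMost])
  finally show ?thesis
    unfolding card_shift_Diff_Min[OF assms(2) False] by simp
qed

lemma toeplitz_max_clique_diff_closed:
  fixes t :: "nat \<Rightarrow> nat"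
  assumes mono: "strict_mono_on {1..k} t"
    and C: "is_clique V (toeplitz_adj k t) C" "finite C" "card C = k + 1"
    and ij: "i \<in> {1..k}" "j \<in> {1..k}" "i < j"
  shows "t j - t i \<in> t ` {1..k}"
proof -
  define m where "m = Min C"
  have "C \<noteq> {}"
    using C(3) by auto
  have "card (t ` {1..k}) = k"
    using strict_mono_on_imp_inj_on[OF mono] by (simp add: card_image)
  have shift_eq: "(\<lambda>v. v - m) ` (C - {m}) = t ` {1..k}"
  proof (rule card_subset_eq)
    show "(\<lambda>v. v - m) ` (C - {m}) \<subseteq> t ` {1..k}"
      unfolding m_def by (rule toeplitz_clique_shift_subset[OF C(1,2)])
    show "card ((\<lambda>v. v - m) ` (C - {m})) = card (t ` {1..k})"
      using card_shift_Diff_Min[OF C(2) \<open>C \<noteq> {}\<close>] C(3) \<open>card (t ` {1..k}) = k\<close>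
      unfolding m_def by simp
  qed simp
  have in_C: "m + t l \<in> C" if "l \<in> {1..k}" for l
  proof -
    have "t l \<in> (\<lambda>v. v - m) ` (C - {m})"
      unfolding shift_eq using that by (rule imageI)
    then obtain v where "v \<in> C" "t l = v - m"
      by blast
    moreover have "m \<le> v"
      using C(2) \<open>v \<in> C\<close> unfolding m_def by simp
    ultimately show ?thesis
      by simp
  qed
  have "t i < t j"
    using strict_mono_onD[OF mono] ij by blast
  then have "toeplitz_adj k t (m + t i) (m + t j)"
    using is_cliqueD[OF C(1) in_C in_C] ij by simp
  with \<open>t i < t j\<close> show ?thesis
    by (simp add: toeplitz_adj_iff)
qed

lemma diff_closed_imp_arith:
  fixes t :: "nat \<Rightarrow> nat"
  assumes mono: "strict_mono_on {1..k} t" and "0 < t 1"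
    and closed: "\<And>i j. i \<in> {1..k} \<Longrightarrow> j \<in> {1..k} \<Longrightarrow> i < j \<Longrightarrow> t j - t i \<in> t ` {1..k}"
  shows "\<forall>i\<in>{1..k}. t i = i * t 1"
proof (rule arith_of_const_steps)
  fix j assume j: "1 \<le> j" "j < k"
  have "t j < t (Suc j)"
    using strict_mono_onD[OF mono] j by simp
  moreover have "t 1 \<le> t (Suc j) - t j"
    using dist_ge_first[OF mono closed[of j "Suc j"]] j by simp
  moreover have "t (Suc j) - t 1 \<le> t j \<or> t (Suc j) \<le> t (Suc j) - t 1"
    using dist_not_between[OF mono j closed[of 1 "Suc j"]] j by simp
  ultimately show "t (Suc j) = t j + t 1"
    using \<open>0 < t 1\<close> by linarith
qed

lemma arith_toeplitz_clique:
  assumes "0 < t 1" "\<forall>i\<in>{1..k}. t i = i * t 1" "k * t 1 < n"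
  defines "C \<equiv> (\<lambda>i. 1 + i * t 1) ` {0..k}"
  shows "is_clique {1..n} (toeplitz_adj k t) C" "card C = k + 1"
proof -
  have "1 + i * t 1 \<le> n" if "i \<le> k" for i
    using mult_le_mono1[OF that, of "t 1"] assms(3) by linarith
  then have "C \<subseteq> {1..n}"
    unfolding C_def by auto
  have adj: "toeplitz_adj k t (1 + i * t 1) (1 + j * t 1)" if "i \<le> k" "j \<le> k" "i < j" for i j
  proof -
    have "j - i \<in> {1..k}"
      using that by auto
    moreover have "(1 + j * t 1) - (1 + i * t 1) = t (j - i)"
      using assms(2)[rule_format, OF \<open>j - i \<in> {1..k}\<close>] by (simp add: diff_mult_distrib)
    ultimately have "(1 + j * t 1) - (1 + i * t 1) \<in> t ` {1..k}"
      by simp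
    then show ?thesis
      using that assms(1) by (simp add: toeplitz_adj_iff)
  qed
  have "toeplitz_adj k t u v" if u: "u \<in> C" and v: "v \<in> C" and "u \<noteq> v" for u v
  proof -
    obtain i j where ij: "i \<le> k" "j \<le> k" "u = 1 + i * t 1" "v = 1 + j * t 1"
      using u v unfolding C_def by auto
    with \<open>u \<noteq> v\<close> have "i \<noteq> j"
      by blast
    then consider "i < j" | "j < i"
      by linarith
    then show ?thesis
    proof cases
      case 1
      then show ?thesis
        using adj ij by simp
    next
      case 2
      then show ?thesis
        using adj[of j i] ij toeplitz_adj_commute[of k t u v] by simp
    qed
  qed
  with \<open>C \<subseteq> {1..n}\<close> show "is_clique {1..n} (toeplitz_adj k t) C"
    unfolding is_clique_def by blast
  have "inj_on (\<lambda>i. 1 + i * t 1) {0..k}"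
    using assms(1) by (intro inj_onI) simp
  then show "card C = k + 1"
    unfolding C_def by (simp add: card_image)
qed

lemma clique_number_eq_iff:
  assumes "finite V" and bound: "\<And>C. is_clique V E C \<Longrightarrow> card C \<le> b"
  shows "clique_number V E = b \<longleftrightarrow> (\<exists>C. is_clique V E C \<and> card C = b)"
proof -
  define S where "S = card ` {C. is_clique V E C}"
  have "finite S"
    unfolding S_def is_clique_def using assms(1) by simp
  moreover have "{} \<in> {C. is_clique V E C}"
    unfolding is_clique_def by simp
  then have "0 \<in> S"
    unfolding S_def by (metis card.empty imageI)
  moreover have "\<forall>s\<in>S. s \<le> b"
    unfolding S_def using bound by blast
  ultimately have "Max S = b \<longleftrightarrow> b \<in> S"
    using Max_in[of S] Max_eqI[of S b] by blast
  also have "b \<in> S \<longleftrightarrow> (\<exists>C. is_clique V E C \<and> card C = b)"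
    unfolding S_def by blast
  finally show ?thesis
    unfolding clique_number_def S_def .
qed

lemma toeplitz_clique_number_eq_iff:
  assumes "toeplitz_params n k t"
  shows "(\<forall>i\<in>{1..k}. t i = i * t 1) \<longleftrightarrow> clique_number {1..n} (toeplitz_adj k t) = k + 1"
proof -
  have mono: "strict_mono_on {1..k} t" and "0 < t 1" and "t k < n" "1 \<le> k"
    using assms toeplitz_params_strict_mono unfolding toeplitz_params_def by auto
  have finite_clique: "finite C" if "is_clique {1..n} (toeplitz_adj k t) C" for C
    using that unfolding is_clique_def by (meson finite_atLeastAtMost finite_subset)
  have "clique_number {1..n} (toeplitz_adj k t) = k + 1 \<longleftrightarrow>
      (\<exists>C. is_clique {1..n} (toeplitz_adj k t) C \<and> card C = k + 1)"
    using card_toeplitz_clique_le finite_clique by (intro clique_number_eq_iff) auto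
  also have "\<dots> \<longleftrightarrow> (\<forall>i\<in>{1..k}. t i = i * t 1)"
  proof
    assume "\<exists>C. is_clique {1..n} (toeplitz_adj k t) C \<and> card C = k + 1"
    then obtain C where "is_clique {1..n} (toeplitz_adj k t) C" "card C = k + 1"
      by blast
    then show "\<forall>i\<in>{1..k}. t i = i * t 1"
      using toeplitz_max_clique_diff_closed[OF mono] finite_clique \<open>0 < t 1\<close>
      by (intro diff_closed_imp_arith[OF mono]) blast+
  next
    assume arith: "\<forall>i\<in>{1..k}. t i = i * t 1"
    have "k * t 1 < n"
      using \<open>t k < n\<close> \<open>1 \<le> k\<close> arith[rule_format, of k] by simp
    then show "\<exists>C. is_clique {1..n} (toeplitz_adj k t) C \<and> card C = k + 1"
      using arith_toeplitz_clique[OF \<open>0 < t 1\<close> arith] by blast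
  qed
  finally show ?thesis
    by simp
qed

section \<open>Interval graphs are chordal\<close>

lemma is_interval_UN_chain:
  fixes J :: "nat \<Rightarrow> real set"
  assumes "i \<le> j"
    and interval: "\<And>l. i \<le> l \<Longrightarrow> l \<le> j \<Longrightarrow> is_interval (J l)"
    and meet: "\<And>l. i \<le> l \<Longrightarrow> l < j \<Longrightarrow> J l \<inter> J (Suc l) \<noteq> {}"
  shows "is_interval (\<Union>l\<in>{i..j}. J l)"
  using assms(1) interval meet
proof (induction j rule: dec_induct)
  case base
  then show ?case by simp
next
  case (step m)
  have union: "is_interval (\<Union>l\<in>{i..m}. J l)"
  proof (rule step.IH)
    show "is_interval (J l)" if "i \<le> l" "l \<le> m" for l
      using that step.hyps by (intro step.prems(1)) simp_all
    show "J l \<inter> J (Suc l) \<noteq> {}" if "i \<le> l" "l < m" for l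
      using that step.hyps by (intro step.prems(2)) simp_all
  qed
  have next_interval: "is_interval (J (Suc m))"
    using step.hyps by (intro step.prems(1)) simp_all
  have "J m \<inter> J (Suc m) \<noteq> {}"
    using step.hyps by (intro step.prems(2)) simp_all
  moreover have "J m \<subseteq> (\<Union>l\<in>{i..m}. J l)"
    using step.hyps by (intro UN_upper) simp
  ultimately have "(\<Union>l\<in>{i..m}. J l) \<inter> J (Suc m) \<noteq> {}"
    by blast
  moreover have "(\<Union>l\<in>{i..Suc m}. J l) = (\<Union>l\<in>{i..m}. J l) \<union> J (Suc m)"
    using step.hyps by (simp add: atLeastAtMostSuc_conv sup_commute)
  ultimately show ?case
    using union next_interval unfolding is_interval_connected_1 by (metis connected_Un)
qed

lemma intervals_no_induced_4_cycle:
  fixes A B C D :: "real set"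
  assumes "is_interval A" "is_interval B" "is_interval C" "is_interval D"
    and "A \<inter> B \<noteq> {}" "B \<inter> C \<noteq> {}" "C \<inter> D \<noteq> {}" "D \<inter> A \<noteq> {}"
  shows "A \<inter> C \<noteq> {} \<or> B \<inter> D \<noteq> {}"
proof (rule ccontr)
  assume "\<not> (A \<inter> C \<noteq> {} \<or> B \<inter> D \<noteq> {})"
  then have AC: "A \<inter> C = {}" and BD: "B \<inter> D = {}"
    by auto
  obtain x y u w where x: "x \<in> A" "x \<in> B" and y: "y \<in> B" "y \<in> C"
    and u: "u \<in> C" "u \<in> D" and w: "w \<in> D" "w \<in> A"
    using assms(5-8) by blast
  have between: "z \<in> S" if "is_interval S" "p \<in> S" "q \<in> S" "p \<le> z" "z \<le> q"
    for S and p q z :: real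
    using that unfolding is_interval_1 by blast
  have outside_B: "z < min x y \<or> max x y < z" if "z \<in> D" for z
  proof -
    have "z \<notin> B" using that BD by blast
    then show ?thesis
      using between[OF assms(2) x(2) y(1), of z] between[OF assms(2) y(1) x(2), of z]
      unfolding min_def max_def by (smt (verit))
  qed
  have "y \<notin> A" "x \<notin> C"
    using x y AC by blast+
  show False
  proof (cases "x \<le> y")
    case True
    show False
    proof (cases "w < x")
      case True
      with \<open>x \<le> y\<close> show False
        using outside_B[OF u(2)] between[OF assms(3) u(1) y(2), of x]
          between[OF assms(4) w(1) u(2), of x] \<open>x \<notin> C\<close> x(2) BD
        by (auto simp: min_def max_def)
    next
      case False
      with \<open>x \<le> y\<close> show False
        using outside_B[OF w(1)] between[OF assms(1) x(1) w(2), of y] \<open>y \<notin> A\<close>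
        by (auto simp: min_def max_def)
    qed
  next
    case False
    show False
    proof (cases "w < y")
      case True
      with \<open>\<not> x \<le> y\<close> show False
        using outside_B[OF w(1)] between[OF assms(1) w(2) x(1), of y] \<open>y \<notin> A\<close>
        by (auto simp: min_def max_def)
    next
      case False
      with \<open>\<not> x \<le> y\<close> show False
        using outside_B[OF u(2)] outside_B[OF w(1)] between[OF assms(3) y(2) u(1), of x]
          between[OF assms(4) u(2) w(1), of x] \<open>x \<notin> C\<close> x(2) BD
        by (auto simp: min_def max_def)
    qed
  qed
qed

lemma no_interval_cycle:
  fixes J :: "nat \<Rightarrow> real set"
  assumes L4: "4 \<le> L" and J_interval: "\<And>i. i < L \<Longrightarrow> is_interval (J i)"
    and J_meet: "\<And>i j. i < L \<Longrightarrow> j < L \<Longrightarrow> i \<noteq> j \<Longrightarrow>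
      J i \<inter> J j \<noteq> {} \<longleftrightarrow> j = (i + 1) mod L \<or> i = (j + 1) mod L"
  shows False
proof -
  define U where "U = (\<Union>l\<in>{3..L - 1}. J l)"
  have U_interval: "is_interval U"
    unfolding U_def
  proof (rule is_interval_UN_chain)
    show "is_interval (J l)" if "3 \<le> l" "l \<le> L - 1" for l
      using that L4 by (intro J_interval) simp
    show "J l \<inter> J (Suc l) \<noteq> {}" if "3 \<le> l" "l < L - 1" for l
      using that J_meet[of l "Suc l"] by simp
  qed (use L4 in simp)
  have J3_sub: "J 3 \<subseteq> U" and Jlast_sub: "J (L - 1) \<subseteq> U"
    using L4 unfolding U_def by (intro UN_upper; simp)+
  have "J 2 \<inter> J 3 \<noteq> {}"
    using J_meet[of 2 3] L4 by simp
  with J3_sub have J2_U: "J 2 \<inter> U \<noteq> {}"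
    by blast
  have "J (L - 1) \<inter> J 0 \<noteq> {}"
    using J_meet[of "L - 1" 0] L4 by simp
  with Jlast_sub have U_J0: "U \<inter> J 0 \<noteq> {}"
    by blast
  have "J 1 \<inter> J l = {}" if "l \<in> {3..L - 1}" for l
  proof -
    have "(l + 1) mod L \<noteq> 1"
    proof (cases "l + 1 = L")
      case False
      with that have "l + 1 < L"
        by auto
      with that show ?thesis
        by simp
    qed (use L4 in simp)
    moreover have "l < L"
      using that L4 by auto
    ultimately show ?thesis
      using J_meet[of 1 l] that by simp
  qed
  then have J1_U: "J 1 \<inter> U = {}"
    unfolding U_def by (simp add: Int_UN_distrib)
  have J0_J2: "J 0 \<inter> J 2 = {}" and J0_J1: "J 0 \<inter> J 1 \<noteq> {}" and J1_J2: "J 1 \<inter> J 2 \<noteq> {}"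
    using J_meet[of 0 2] J_meet[of 0 1] J_meet[of 1 2] L4 by simp_all
  have "is_interval (J 0)" "is_interval (J 1)" "is_interval (J 2)"
    using J_interval L4 by simp_all
  from intervals_no_induced_4_cycle[OF this U_interval J0_J1 J1_J2 J2_U U_J0] J0_J2 J1_U
  show False
    by blast
qed

lemma interval_graph_imp_chordal:
  assumes "interval_graph V E"
  shows "chordal V E"
  unfolding chordal_def has_hole_def
proof clarify
  fix cs :: "'a list"
  assume len: "4 \<le> length cs" and "distinct cs" and "set cs \<subseteq> V"
    and hole: "\<forall>i<length cs. \<forall>j<length cs. i \<noteq> j \<longrightarrow>
        (E (cs ! i) (cs ! j) \<longleftrightarrow> (j = (i + 1) mod length cs \<or> i = (j + 1) mod length cs))"
  obtain I :: "'a \<Rightarrow> real set" where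
    I: "\<forall>v\<in>V. is_interval (I v) \<and> I v \<noteq> {}"
    and E: "\<forall>u\<in>V. \<forall>v\<in>V. u \<noteq> v \<longrightarrow> (E u v \<longleftrightarrow> I u \<inter> I v \<noteq> {})"
    using assms unfolding interval_graph_def by (elim exE conjE)
  have in_V: "cs ! i \<in> V" if "i < length cs" for i
    using that \<open>set cs \<subseteq> V\<close> by (meson nth_mem subsetD)
  show False
  proof (rule no_interval_cycle[OF len])
    show "is_interval (I (cs ! i))" if "i < length cs" for i
      using I in_V[OF that] by blast
    fix i j assume ij: "i < length cs" "j < length cs" "i \<noteq> j"
    then have "cs ! i \<noteq> cs ! j"
      using \<open>distinct cs\<close> by (simp add: nth_eq_iff_index_eq)
    then have "E (cs ! i) (cs ! j) \<longleftrightarrow> I (cs ! i) \<inter> I (cs ! j) \<noteq> {}"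
      using E in_V ij by blast
    with hole[rule_format, OF ij]
    show "I (cs ! i) \<inter> I (cs ! j) \<noteq> {} \<longleftrightarrow> j = (i + 1) mod length cs \<or> i = (j + 1) mod length cs"
      by simp
  qed
qed

section \<open>Arithmetic Toeplitz graphs are interval graphs\<close>

lemma interval_graph_of_unit_intervals:
  fixes f :: "'a \<Rightarrow> real"
  assumes "0 \<le> c"
    and adj: "\<And>u v. u \<in> V \<Longrightarrow> v \<in> V \<Longrightarrow> u \<noteq> v \<Longrightarrow> E u v \<longleftrightarrow> \<bar>f u - f v\<bar> \<le> c"
  shows "interval_graph V E"
  unfolding interval_graph_def
proof (intro exI[of _ "\<lambda>v. {f v..f v + c}"] conjI ballI impI)
  fix v
  show "is_interval {f v..f v + c}"
    by (rule is_interval_cc)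
  show "{f v..f v + c} \<noteq> {}"
    using assms(1) by simp
next
  fix u v assume "u \<in> V" "v \<in> V" "u \<noteq> v"
  have "{f u..f u + c} \<inter> {f v..f v + c} \<noteq> {} \<longleftrightarrow> \<bar>f u - f v\<bar> \<le> c"
  proof
    assume "{f u..f u + c} \<inter> {f v..f v + c} \<noteq> {}"
    then obtain z where "z \<in> {f u..f u + c}" "z \<in> {f v..f v + c}"
      by blast
    then show "\<bar>f u - f v\<bar> \<le> c"
      by (auto simp: abs_le_iff)
  next
    assume "\<bar>f u - f v\<bar> \<le> c"
    then have "max (f u) (f v) \<in> {f u..f u + c} \<inter> {f v..f v + c}"
      by (auto simp: max_def)
    then show "{f u..f u + c} \<inter> {f v..f v + c} \<noteq> {}"
      by blast
  qed
  with adj[OF \<open>u \<in> V\<close> \<open>v \<in> V\<close> \<open>u \<noteq> v\<close>]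
  show "E u v \<longleftrightarrow> {f u..f u + c} \<inter> {f v..f v + c} \<noteq> {}"
    by simp
qed

lemma diff_mem_multiples_iff:
  fixes a u v k :: nat
  assumes "0 < a" "v < u"
  shows "u - v \<in> (\<lambda>l. l * a) ` {1..k} \<longleftrightarrow> u mod a = v mod a \<and> u div a - v div a \<le> k"
proof
  assume "u - v \<in> (\<lambda>l. l * a) ` {1..k}"
  then obtain l where l: "l \<in> {1..k}" "u - v = l * a"
    by blast
  then have u: "u = v + l * a"
    using assms(2) by simp
  then have "u mod a = v mod a" "u div a = v div a + l"
    using assms(1) by simp_all
  with l show "u mod a = v mod a \<and> u div a - v div a \<le> k"
    by simp
next
  assume same: "u mod a = v mod a \<and> u div a - v div a \<le> k"
  have u: "u = u div a * a + u mod a" and v: "v = v div a * a + v mod a"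
    by simp_all
  have "v div a < u div a"
  proof (rule ccontr)
    assume "\<not> v div a < u div a"
    then have "u div a * a \<le> v div a * a"
      by simp
    with u v same assms(2) show False
      by linarith
  qed
  moreover have "u - v = u div a * a - v div a * a"
    using u v same by arith
  then have "u - v = (u div a - v div a) * a"
    by (simp add: diff_mult_distrib)
  ultimately show "u - v \<in> (\<lambda>l. l * a) ` {1..k}"
    using same by (intro image_eqI[of _ _ "u div a - v div a"]) auto
qed

lemma toeplitz_adj_arith_iff:
  fixes a :: nat
  assumes "0 < a" and arith: "\<forall>i\<in>{1..k}. t i = i * a" and "u \<noteq> v"
  shows "toeplitz_adj k t u v \<longleftrightarrow> u mod a = v mod a \<and> \<bar>int (u div a) - int (v div a)\<bar> \<le> int k"
proof -
  have T: "t ` {1..k} = (\<lambda>l. l * a) ` {1..k}"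
    using arith by (intro image_cong) simp_all
  have ordered: "toeplitz_adj k t u v \<longleftrightarrow>
      u mod a = v mod a \<and> \<bar>int (u div a) - int (v div a)\<bar> \<le> int k" if "v < u" for u v
  proof -
    have "\<bar>int (u div a) - int (v div a)\<bar> = int (u div a - v div a)"
      using that by (simp add: div_le_mono)
    moreover have "toeplitz_adj k t u v \<longleftrightarrow> u - v \<in> (\<lambda>l. l * a) ` {1..k}"
      using that unfolding toeplitz_adj_iff T by simp
    ultimately show ?thesis
      by (simp only: diff_mem_multiples_iff[OF assms(1) that] of_nat_le_iff)
  qed
  show ?thesis
  proof (cases "v < u")
    case False
    with assms(3) have "u < v"
      by simp
    then show ?thesis
      using ordered[of u v] toeplitz_adj_commute[of k t u v] by (auto simp: abs_minus_commute)
  qed (rule ordered)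
qed

lemma abs_mult_add_le_iff:
  fixes r q c k :: int
  assumes "0 \<le> k" "\<bar>q\<bar> + k < c"
  shows "\<bar>r * c + q\<bar> \<le> k \<longleftrightarrow> r = 0 \<and> \<bar>q\<bar> \<le> k"
proof (cases "r = 0")
  case False
  then have "1 \<le> \<bar>r\<bar>" "0 < c"
    using assms by linarith+
  then have "c \<le> \<bar>r\<bar> * c"
    using mult_right_mono[of 1 "\<bar>r\<bar>" c] by simp
  then have "c \<le> \<bar>r * c\<bar>"
    using assms by (simp add: abs_mult)
  with False assms show ?thesis
    by linarith
qed simp

lemma arith_toeplitz_interval_graph:
  fixes a :: nat
  assumes "0 < a" and arith: "\<forall>i\<in>{1..k}. t i = i * a"
  shows "interval_graph {1..n} (toeplitz_adj k t)"
proof -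
  define c :: int where "c = int n + int k + 1"
  \<comment> \<open>residue classes mod a are placed at distance c > n + k apart\<close>
  define f where "f v = real_of_int (int (v mod a) * c + int (v div a))" for v
  have "toeplitz_adj k t u v \<longleftrightarrow> \<bar>f u - f v\<bar> \<le> real k"
    if "u \<in> {1..n}" "v \<in> {1..n}" "u \<noteq> v" for u v
  proof -
    have "u div a \<le> u" "v div a \<le> v"
      by (rule div_le_dividend)+
    moreover have "u \<le> n" "v \<le> n"
      using that by simp_all
    ultimately have "u div a \<le> n" "v div a \<le> n"
      by linarith+
    then have bound: "\<bar>int (u div a) - int (v div a)\<bar> + int k < c"
      unfolding c_def by linarith
    have "f u - f v = real_of_int ((int (u mod a) - int (v mod a)) * c
        + (int (u div a) - int (v div a)))"
      unfolding f_def by (simp add: algebra_simps)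
    then have "\<bar>f u - f v\<bar> \<le> real k \<longleftrightarrow> \<bar>(int (u mod a) - int (v mod a)) * c
        + (int (u div a) - int (v div a))\<bar> \<le> int k"
      by linarith
    also have "\<dots> \<longleftrightarrow> u mod a = v mod a \<and> \<bar>int (u div a) - int (v div a)\<bar> \<le> int k"
      using abs_mult_add_le_iff[OF _ bound] by simp
    also have "\<dots> \<longleftrightarrow> toeplitz_adj k t u v"
      using toeplitz_adj_arith_iff[OF assms \<open>u \<noteq> v\<close>] by simp
    finally show ?thesis
      by simp
  qed
  then show ?thesis
    by (intro interval_graph_of_unit_intervals[of "real k" _ _ f]) simp_all
qed

section \<open>Holes in non-arithmetic Toeplitz graphs\<close>

lemma toeplitz_hole_of_sum_diff:
  assumes "p \<in> t ` {1..k}" "q \<in> t ` {1..k}" "0 < p" "p < q"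
    and "p + q \<notin> t ` {1..k}" "q - p \<notin> t ` {1..k}" "p + q < n"
  shows "has_hole {1..n} (toeplitz_adj k t)"
proof -
  \<comment> \<open>an opaque name for the distance set stops auto from unfolding the image membership\<close>
  obtain T where T: "T = t ` {1..k}"
    by blast
  have less_4: "i < 4 \<longleftrightarrow> i = 0 \<or> i = 1 \<or> i = 2 \<or> i = 3" for i :: nat
    by auto
  let ?cs = "[1, 1 + p, 1 + p + q, 1 + q]"
  have len: "length ?cs = 4"
    by simp
  have "4 \<le> length ?cs" "distinct ?cs" "set ?cs \<subseteq> {1..n}"
    using assms(3,4,7) by auto
  moreover have "\<forall>i<length ?cs. \<forall>j<length ?cs. i \<noteq> j \<longrightarrow> (toeplitz_adj k t (?cs ! i) (?cs ! j)
      \<longleftrightarrow> j = (i + 1) mod length ?cs \<or> i = (j + 1) mod length ?cs)"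
    using assms unfolding len less_4 toeplitz_adj_iff T[symmetric]
    by (auto simp: add.commute)
  ultimately show ?thesis
    unfolding has_hole_def by blast
qed

lemma dvd_mult_iff_div_gcd_dvd:
  fixes m a c :: int
  assumes "a \<noteq> 0"
  shows "m dvd c * a \<longleftrightarrow> m div gcd m a dvd c"
proof -
  have "gcd m a \<noteq> 0"
    using assms by simp
  then obtain m' a' where m: "m = m' * gcd m a" and a: "a = a' * gcd m a" and "coprime m' a'"
    using gcd_coprime_exists by blast
  have "m dvd c * a \<longleftrightarrow> m' * gcd m a dvd (c * a') * gcd m a"
    using m a by (metis mult.assoc)
  also have "\<dots> \<longleftrightarrow> m' dvd c * a'"
    using \<open>gcd m a \<noteq> 0\<close> by (rule dvd_times_right_cancel_iff)
  also have "\<dots> \<longleftrightarrow> m' dvd c"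
    using \<open>coprime m' a'\<close> by (simp add: coprime_dvd_mult_left_iff)
  also have "m' = m div gcd m a"
    using m \<open>gcd m a \<noteq> 0\<close> by (metis nonzero_mult_div_cancel_right)
  finally show ?thesis .
qed

lemma dvd_diff_mod_iff:
  fixes m x y c :: int
  shows "m dvd x mod m - y mod m - c \<longleftrightarrow> m dvd x - y - c"
  by (smt (verit, best) mod_diff_left_eq mod_diff_right_eq mod_eq_0_iff_dvd)

lemma dvd_small_diff_iff:
  fixes L d :: int
  assumes "0 < L" "- 2 * L < d" "d < L"
  shows "L dvd d \<longleftrightarrow> d = 0 \<or> d = - L"
proof
  assume "L dvd d"
  then obtain z where z: "d = L * z"
    by (elim dvdE)
  have "z < 1"
  proof (rule ccontr)
    assume "\<not> z < 1"
    then have "L * 1 \<le> L * z"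
      using assms(1) by (intro mult_left_mono) simp_all
    with z assms(3) show False
      by linarith
  qed
  moreover have "- 2 < z"
  proof (rule ccontr)
    assume "\<not> - 2 < z"
    then have "L * z \<le> L * (- 2)"
      using assms(1) by (intro mult_left_mono) simp_all
    with z assms(2) show False
      by linarith
  qed
  ultimately have "z = 0 \<or> z = - 1"
    by linarith
  with z show "d = 0 \<or> d = - L"
    by auto
qed auto

lemma abs_eq_either_iff_dvd:
  fixes m a d :: int
  assumes "0 < a" "a < m" "\<bar>d\<bar> < m"
  shows "\<bar>d\<bar> = a \<or> \<bar>d\<bar> = m - a \<longleftrightarrow> m dvd d - a \<or> m dvd d + a"
proof -
  have "m dvd d - a \<longleftrightarrow> d - a = 0 \<or> d - a = - m"
    using assms by (intro dvd_small_diff_iff) linarith+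
  moreover have "m dvd - (d + a) \<longleftrightarrow> - (d + a) = 0 \<or> - (d + a) = - m"
    using assms by (intro dvd_small_diff_iff) linarith+
  ultimately show ?thesis
    using assms by (simp only: dvd_minus_iff) arith
qed

lemma int_dvd_index_diff_iff:
  fixes L i j :: nat
  assumes "i < L" "j < L"
  shows "int L dvd int j - int i - 0 \<longleftrightarrow> j = i"
    and "int L dvd int j - int i - 1 \<longleftrightarrow> j = (i + 1) mod L"
proof -
  have "int L dvd int j - int i - 0 \<longleftrightarrow> int j - int i - 0 = 0 \<or> int j - int i - 0 = - int L"
    using assms by (intro dvd_small_diff_iff) simp_all
  then show "int L dvd int j - int i - 0 \<longleftrightarrow> j = i"
    using assms by auto
  have "int L dvd int j - int i - 1 \<longleftrightarrow> int j - int i - 1 = 0 \<or> int j - int i - 1 = - int L"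
    using assms by (intro dvd_small_diff_iff) simp_all
  also have "\<dots> \<longleftrightarrow> j = (i + 1) mod L"
    using assms by (cases "i + 1 = L") auto
  finally show "int L dvd int j - int i - 1 \<longleftrightarrow> j = (i + 1) mod L" .
qed

lemma four_le_sum_div_gcd:
  fixes a b :: int
  assumes "0 < a" "a < b" "b \<noteq> 2 * a"
  shows "4 \<le> (a + b) div gcd (a + b) a"
proof -
  define g where "g = gcd (a + b) a"
  have "0 < g"
    using assms(1) unfolding g_def by simp
  have "g dvd a" "g dvd a + b"
    unfolding g_def by simp_all
  then have "g dvd b"
    by (simp add: dvd_add_right_iff)
  with \<open>g dvd a\<close> obtain a' b' where a: "a = a' * g" and b: "b = b' * g"
    by (metis dvdE mult.commute)
  then have "(a + b) div g = a' + b'"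
    using \<open>0 < g\<close> by (simp add: distrib_right[symmetric])
  moreover have "0 < a'" "a' < b'"
    using a b assms(1,2) \<open>0 < g\<close> by (simp_all add: zero_less_mult_iff)
  moreover have "\<not> (a' = 1 \<and> b' = 2)"
    using a b assms(3) by auto
  ultimately show ?thesis
    unfolding g_def by linarith
qed

lemma two_step_positions:
  fixes a b :: nat and m :: int
  assumes "0 < a" "a < b"
    and m: "m = int a + int b" and L: "L = nat (m div gcd m (int a))"
    and p: "p = (\<lambda>i::nat. int i * int a mod m)"
    and "i < L" "j < L"
  shows "p i = p j \<longleftrightarrow> i = j"
    and "i \<noteq> j \<Longrightarrow> \<bar>p j - p i\<bar> = int a \<or> \<bar>p j - p i\<bar> = int b
      \<longleftrightarrow> j = (i + 1) mod L \<or> i = (j + 1) mod L"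
proof -
  have "0 < m"
    using assms(1) m by simp
  have int_L: "int L = m div gcd m (int a)"
    using \<open>0 < m\<close> L by (simp add: pos_imp_zdiv_nonneg_iff)
  have dvd_index: "m dvd p j' - p i' - e * int a \<longleftrightarrow> int L dvd int j' - int i' - e" for i' j' e
  proof -
    have "m dvd p j' - p i' - e * int a \<longleftrightarrow> m dvd int j' * int a - int i' * int a - e * int a"
      unfolding p by (rule dvd_diff_mod_iff)
    also have "\<dots> \<longleftrightarrow> m dvd (int j' - int i' - e) * int a"
      by (simp add: algebra_simps)
    also have "\<dots> \<longleftrightarrow> int L dvd int j' - int i' - e"
      unfolding int_L using assms(1) by (intro dvd_mult_iff_div_gcd_dvd) simp
    finally show ?thesis .
  qed
  have p_range: "0 \<le> p l" "p l < m" for l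
    unfolding p using \<open>0 < m\<close> by simp_all
  show "p i = p j \<longleftrightarrow> i = j"
    using dvd_index[of j i 0] int_dvd_index_diff_iff(1)[OF assms(6,7)] by auto
  assume "i \<noteq> j"
  have "\<bar>p j - p i\<bar> < m"
    using p_range[of i] p_range[of j] by arith
  then have either: "\<bar>p j - p i\<bar> = int a \<or> \<bar>p j - p i\<bar> = m - int a
      \<longleftrightarrow> m dvd p j - p i - int a \<or> m dvd p j - p i + int a"
    using assms(1,2) m by (intro abs_eq_either_iff_dvd) simp_all
  have swap: "m dvd p j - p i + int a \<longleftrightarrow> m dvd p i - p j - 1 * int a"
    using dvd_minus_iff[of m "p j - p i + int a"] by (simp add: algebra_simps)
  show "\<bar>p j - p i\<bar> = int a \<or> \<bar>p j - p i\<bar> = int b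
      \<longleftrightarrow> j = (i + 1) mod L \<or> i = (j + 1) mod L"
    using either swap dvd_index[of i j 1] dvd_index[of j i 1] int_dvd_index_diff_iff(2)[OF assms(6,7)]
      int_dvd_index_diff_iff(2)[OF assms(7,6)] m by simp
qed

lemma hole_of_two_distances:
  fixes a b :: nat and E :: "nat \<Rightarrow> nat \<Rightarrow> bool"
  assumes "0 < a" "a < b" "b \<noteq> 2 * a" "{1..a + b} \<subseteq> V"
    and adj: "\<And>u v. u \<in> {1..a + b} \<Longrightarrow> v \<in> {1..a + b} \<Longrightarrow> u \<noteq> v \<Longrightarrow>
      E u v \<longleftrightarrow> nat \<bar>int u - int v\<bar> = a \<or> nat \<bar>int u - int v\<bar> = b"
  shows "has_hole V E"
proof -
  define m where "m = int a + int b"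
  define L where "L = nat (m div gcd m (int a))"
  define p where "p = (\<lambda>i::nat. int i * int a mod m)"
  note positions = two_step_positions[OF assms(1,2) m_def L_def p_def]
  have "4 \<le> m div gcd m (int a)"
    unfolding m_def using assms(1-3) by (intro four_le_sum_div_gcd) simp_all
  then have "4 \<le> L"
    unfolding L_def by linarith
  define cs where "cs = map (\<lambda>i. nat (p i) + 1) [0..<L]"
  have len: "length cs = L"
    unfolding cs_def by simp
  have p_range: "0 \<le> p l" "p l < m" for l
    unfolding p_def m_def using assms(1) by simp_all
  have cs_nth: "cs ! i = nat (p i) + 1" if "i < L" for i
    unfolding cs_def using that by simp
  have cs_mem: "cs ! i \<in> {1..a + b}" if "i < L" for i
    using cs_nth[OF that] p_range[of i] unfolding m_def by auto
  have cs_eq: "cs ! i = cs ! j \<longleftrightarrow> i = j" if "i < L" "j < L" for i j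
    using cs_nth that p_range positions(1)[OF that] by (metis add_right_cancel eq_nat_nat_iff)
  have cs_dist: "nat \<bar>int (cs ! i) - int (cs ! j)\<bar> = nat \<bar>p j - p i\<bar>" if "i < L" "j < L" for i j
    using cs_nth that p_range by (simp add: abs_minus_commute)
  show ?thesis
    unfolding has_hole_def
  proof (intro exI[of _ cs] conjI allI impI)
    show "4 \<le> length cs"
      using \<open>4 \<le> L\<close> len by simp
    show "distinct cs"
      unfolding distinct_conv_nth len using cs_eq by blast
    show "set cs \<subseteq> V"
    proof
      fix v assume "v \<in> set cs"
      then obtain i where "i < L" "v = cs ! i"
        using len by (auto simp: in_set_conv_nth)
      then show "v \<in> V"
        using cs_mem assms(4) by blast
    qed
    fix i j assume "i < length cs" "j < length cs" "i \<noteq> j"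
    then have ij: "i < L" "j < L"
      using len by simp_all
    have "E (cs ! i) (cs ! j) \<longleftrightarrow> \<bar>p j - p i\<bar> = int a \<or> \<bar>p j - p i\<bar> = int b"
      using adj[OF cs_mem[OF ij(1)] cs_mem[OF ij(2)]] cs_eq[OF ij] \<open>i \<noteq> j\<close> cs_dist[OF ij]
      by (simp add: nat_eq_iff)
    also have "\<dots> \<longleftrightarrow> j = (i + 1) mod L \<or> i = (j + 1) mod L"
      using positions(2)[OF ij \<open>i \<noteq> j\<close>] .
    finally show "E (cs ! i) (cs ! j) \<longleftrightarrow> j = (i + 1) mod length cs \<or> i = (j + 1) mod length cs"
      unfolding len .
  qed
qed

(* The hypothesis sum_or_diff states that toeplitz_hole_of_sum_diff yields no 4-hole. *)
context
  fixes k :: nat and t :: "nat \<Rightarrow> nat"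
  assumes mono: "strict_mono_on {1..k} t" and first_pos: "0 < t 1" and three_le_k: "3 \<le> k"
    and sum_or_diff: "\<And>p q. p \<in> t ` {1..k} \<Longrightarrow> q \<in> t ` {1..k} \<Longrightarrow> p < q \<Longrightarrow>
      p + q < t (k - 1) + t k \<Longrightarrow> q - p \<in> t ` {1..k} \<or> p + q \<in> t ` {1..k}"
begin

private lemma second_last_less_last: "t (k - 1) < t k"
  using strict_mono_onD[OF mono, of "k - 1" k] three_le_k by simp

lemma last_minus_dist_mem:
  assumes "p \<in> t ` {1..k}" "p < t (k - 1)"
  shows "t k - p \<in> t ` {1..k}"
proof -
  have "p + t k \<notin> t ` {1..k}"
    using dist_le_last[OF mono] dist_ge_first[OF mono assms(1)] first_pos by fastforce
  moreover have "t k \<in> t ` {1..k}"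
    using three_le_k by simp
  ultimately show ?thesis
    using sum_or_diff[of p "t k"] assms second_last_less_last by auto
qed

lemma second_last_minus_dist_mem:
  assumes "p \<in> t ` {1..k}" "p < t (k - 1)" "t (k - 1) + p \<noteq> t k"
  shows "t (k - 1) - p \<in> t ` {1..k}"
proof -
  have "t (k - 1) + p \<noteq> x" if "x \<in> t ` {1..k}" for x
  proof
    assume x: "t (k - 1) + p = x"
    then have "x < t k"
      using dist_le_last[OF mono that] assms(3) by simp
    then have "x \<le> t (k - 1)"
      using dist_less_last_imp_le[OF mono that] by simp
    with x show False
      using dist_ge_first[OF mono assms(1)] first_pos by simp
  qed
  moreover have "t (k - 1) \<in> t ` {1..k}"
    using three_le_k by simp
  ultimately show ?thesis
    using sum_or_diff[of p "t (k - 1)"] assms second_last_less_last by (auto simp: add.commute)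
qed

lemma last_eq_second_last_plus_first: "t k = t (k - 1) + t 1"
proof -
  have "t k - t 1 \<in> t ` {1..k}"
    using last_minus_dist_mem[of "t 1"] strict_mono_onD[OF mono, of 1 "k - 1"] three_le_k by simp
  moreover have "t k - t 1 < t k"
    using diff_less[of "t 1" "t k"] first_pos second_last_less_last by simp
  ultimately have "t k - t 1 \<le> t (k - 1)"
    by (rule dist_less_last_imp_le[OF mono])
  moreover have "\<not> t k < t (k - 1) + t 1"
  proof
    assume less: "t k < t (k - 1) + t 1"
    define s where "s = t (k - 2)"
    have s: "s \<in> t ` {1..k}" "s < t (k - 1)" "t 1 \<le> s"
      using three_le_k strict_mono_onD[OF mono, of "k - 2" "k - 1"]
        strict_mono_on_leD[OF mono, of 1 "k - 2"] unfolding s_def by simp_all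
    then have "t (k - 1) - s \<in> t ` {1..k}"
      using less by (intro second_last_minus_dist_mem) simp_all
    moreover have "t (k - 1) - s < t (k - 1)"
      using s first_pos by simp
    ultimately have "t k - (t (k - 1) - s) \<in> t ` {1..k}"
      by (rule last_minus_dist_mem)
    moreover have "t k - (t (k - 1) - s) = s + (t k - t (k - 1))"
      using s(2) second_last_less_last by arith
    ultimately have mem: "s + (t k - t (k - 1)) \<in> t ` {1..k}"
      by simp
    have "t 1 \<le> t (k - 1) - s"
      using dist_ge_first[OF mono \<open>t (k - 1) - s \<in> t ` {1..k}\<close>] .
    then have "s + t 1 \<le> t (k - 1)"
      using s(2) by arith
    have "Suc (k - 2) = k - 1"
      using three_le_k by simp
    then have "s + (t k - t (k - 1)) \<le> s \<or> t (k - 1) \<le> s + (t k - t (k - 1))"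
      using dist_not_between[OF mono _ _ mem, of "k - 2"] three_le_k unfolding s_def by simp
    then show False
      using less second_last_less_last \<open>s + t 1 \<le> t (k - 1)\<close> unfolding s_def by arith
  qed
  ultimately show ?thesis
    using second_last_less_last by linarith
qed

lemma dist_plus_first_mem:
  assumes "p \<in> t ` {1..k}" "t 1 < p" "p < t (k - 1)"
  shows "p + t 1 \<in> t ` {1..k}"
proof -
  have "t (k - 1) - p \<in> t ` {1..k}"
    using assms last_eq_second_last_plus_first by (intro second_last_minus_dist_mem) simp_all
  moreover have "t (k - 1) - p < t (k - 1)"
    using assms first_pos by simp
  ultimately have "t k - (t (k - 1) - p) \<in> t ` {1..k}"
    by (rule last_minus_dist_mem)
  moreover have "t k - (t (k - 1) - p) = p + t 1"
    using assms(3) last_eq_second_last_plus_first by simp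
  ultimately show ?thesis
    by simp
qed

lemma step_eq_first_if_below:
  assumes "2 \<le> j" "j \<le> k - 2" "t j + t 1 < t (Suc (Suc j))"
  shows "t j + t 1 = t (Suc j)"
proof -
  have "t 1 < t j" "t j < t (k - 1)"
    using strict_mono_onD[OF mono, of 1 j] strict_mono_onD[OF mono, of j "k - 1"] assms(1,2) three_le_k
    by simp_all
  then have mem: "t j + t 1 \<in> t ` {1..k}"
    using assms(1,2) by (intro dist_plus_first_mem) simp_all
  have "t j + t 1 \<le> t j \<or> t (Suc j) \<le> t j + t 1"
    using dist_not_between[OF mono _ _ mem, of j] assms(1,2) by simp
  moreover have "t j + t 1 \<le> t (Suc j) \<or> t (Suc (Suc j)) \<le> t j + t 1"
    using dist_not_between[OF mono _ _ mem, of "Suc j"] assms(1,2) by simp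
  ultimately show ?thesis
    using assms(3) first_pos by linarith
qed

lemma middle_step_eq_first:
  assumes "2 \<le> j" "j \<le> k - 2"
  shows "t j + t 1 = t (Suc j)"
  using assms(2)
proof (induction j rule: inc_induct)
  case base
  have "t (k - 2) + t 1 < t (Suc (Suc (k - 2)))"
    using last_eq_second_last_plus_first strict_mono_onD[OF mono, of "k - 2" "k - 1"] three_le_k
    by (simp add: Suc_diff_Suc numeral_2_eq_2)
  then show ?case
    using assms by (intro step_eq_first_if_below) simp_all
next
  case (step i)
  have "t i < t (Suc i)"
    using strict_mono_onD[OF mono, of i "Suc i"] assms(1) step.hyps by simp
  then have "t i + t 1 < t (Suc (Suc i))"
    using step.IH by simp
  then show ?case
    using assms(1) step.hyps by (intro step_eq_first_if_below) simp_all
qed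

lemma second_eq_double_first:
  assumes "4 \<le> k"
  shows "t 2 = 2 * t 1"
proof -
  have "t k - t (k - 2) \<in> t ` {1..k}"
    using strict_mono_onD[OF mono, of "k - 2" "k - 1"] assms
    by (intro last_minus_dist_mem) simp_all
  moreover have "t (k - 2) + t 1 = t (k - 1)"
    using middle_step_eq_first[of "k - 2"] assms by (simp add: Suc_diff_Suc numeral_2_eq_2)
  moreover have "t k - t (k - 2) = 2 * t 1"
    using \<open>t (k - 2) + t 1 = t (k - 1)\<close> last_eq_second_last_plus_first by arith
  ultimately have mem: "2 * t 1 \<in> t ` {1..k}"
    by simp
  have "t 2 + t 1 = t 3"
    using middle_step_eq_first[of 2] assms by (simp add: numeral_3_eq_3)
  moreover have "t 1 < t 2"
    using strict_mono_onD[OF mono, of 1 2] assms by simp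
  moreover have "2 * t 1 \<le> t 1 \<or> t 2 \<le> 2 * t 1"
    using dist_not_between[OF mono _ _ mem, of 1] assms by (simp add: numeral_2_eq_2)
  moreover have "2 * t 1 \<le> t 2 \<or> t 3 \<le> 2 * t 1"
    using dist_not_between[OF mono _ _ mem, of 2] assms by (simp add: numeral_3_eq_3)
  ultimately show ?thesis
    using first_pos by linarith
qed

lemma sum_or_diff_closed_imp_arith:
  assumes "4 \<le> k"
  shows "\<forall>i\<in>{1..k}. t i = i * t 1"
proof (rule arith_of_const_steps)
  fix j assume "1 \<le> j" "j < k"
  then consider "j = 1" | "2 \<le> j" "j \<le> k - 2" | "j = k - 1"
    by linarith
  then show "t (Suc j) = t j + t 1"
  proof cases
    case 1
    then show ?thesis
      using second_eq_double_first assms by (simp add: numeral_2_eq_2)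
  next
    case 2
    then show ?thesis
      using middle_step_eq_first by simp
  next
    case 3
    then show ?thesis
      using last_eq_second_last_plus_first assms by simp
  qed
qed

end

lemma toeplitz_hole_of_few_dists:
  assumes "0 < t 1" "t 1 < t 2" "t 2 \<noteq> 2 * t 1" "t 1 + t 2 \<le> n"
    and dists: "t ` {1..k} = {t 1, t 2} \<or> t ` {1..k} = {t 1, t 2, t 1 + t 2}"
  shows "has_hole {1..n} (toeplitz_adj k t)"
proof (rule hole_of_two_distances[OF assms(1-3)])
  show "{1..t 1 + t 2} \<subseteq> {1..n}"
    using assms(4) by simp
  fix u v assume "u \<in> {1..t 1 + t 2}" "v \<in> {1..t 1 + t 2}" "u \<noteq> v"
  then have "nat \<bar>int u - int v\<bar> < t 1 + t 2"
    by auto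
  with dists \<open>u \<noteq> v\<close> show "toeplitz_adj k t u v \<longleftrightarrow>
      nat \<bar>int u - int v\<bar> = t 1 \<or> nat \<bar>int u - int v\<bar> = t 2"
    unfolding toeplitz_adj_nat_abs_iff by auto
qed

lemma not_arith_imp_toeplitz_hole:
  assumes params: "toeplitz_params n k t" and "2 \<le> k" and "t (k - 1) + t k \<le> n"
    and not_arith: "\<not> (\<forall>i\<in>{1..k}. t i = i * t 1)"
  shows "has_hole {1..n} (toeplitz_adj k t)"
proof -
  have mono: "strict_mono_on {1..k} t" and "0 < t 1"
    using params toeplitz_params_strict_mono unfolding toeplitz_params_def by auto
  have "t 1 < t 2"
    using strict_mono_onD[OF mono, of 1 2] \<open>2 \<le> k\<close> by simp
  show ?thesis
  proof (cases "\<forall>p q. p \<in> t ` {1..k} \<longrightarrow> q \<in> t ` {1..k} \<longrightarrow> p < q \<longrightarrow>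
      p + q < t (k - 1) + t k \<longrightarrow> q - p \<in> t ` {1..k} \<or> p + q \<in> t ` {1..k}")
    case False
    then obtain p q where pq: "p \<in> t ` {1..k}" "q \<in> t ` {1..k}" "p < q" "p + q < t (k - 1) + t k"
      and "q - p \<notin> t ` {1..k}" "p + q \<notin> t ` {1..k}"
      by blast
    moreover have "0 < p"
      using dist_ge_first[OF mono pq(1)] \<open>0 < t 1\<close> by simp
    moreover have "p + q < n"
      using pq(4) \<open>t (k - 1) + t k \<le> n\<close> by linarith
    ultimately show ?thesis
      by (intro toeplitz_hole_of_sum_diff)
  next
    case closed: True
    have "\<not> 4 \<le> k"
      using sum_or_diff_closed_imp_arith[OF mono \<open>0 < t 1\<close> _ closed[rule_format]] not_arith by auto
    then consider "k = 2" | "k = 3"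
      using \<open>2 \<le> k\<close> by linarith
    then have "(t ` {1..k} = {t 1, t 2} \<or> t ` {1..k} = {t 1, t 2, t 1 + t 2})
        \<and> t 2 \<noteq> 2 * t 1 \<and> t 1 + t 2 \<le> n"
    proof cases
      case 1
      then have "{1..k} = {1, 2}"
        by auto
      with 1 not_arith \<open>t (k - 1) + t k \<le> n\<close> show ?thesis
        by auto
    next
      case 2
      then have "{1..k} = {1, 2, 3}" and "t 3 = t 1 + t 2"
        using last_eq_second_last_plus_first[OF mono \<open>0 < t 1\<close> _ closed[rule_format]] by auto
      with 2 not_arith \<open>t (k - 1) + t k \<le> n\<close> show ?thesis
        by auto
    qed
    then show ?thesis
      using toeplitz_hole_of_few_dists[OF \<open>0 < t 1\<close> \<open>t 1 < t 2\<close>] by blast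
  qed
qed

theorem theorem3p3:
  fixes n k :: nat and t :: "nat \<Rightarrow> nat"
  assumes "toeplitz_params n k t"
    and "k \<ge> 2"
    and "n \<ge> t (k - 1) + t k"
  shows "(interval_graph {1..n} (toeplitz_adj k t) \<longleftrightarrow> chordal {1..n} (toeplitz_adj k t))
       \<and> (chordal {1..n} (toeplitz_adj k t) \<longleftrightarrow> (\<forall>i\<in>{1..k}. t i = i * t 1))
       \<and> ((\<forall>i\<in>{1..k}. t i = i * t 1) \<longleftrightarrow> clique_number {1..n} (toeplitz_adj k t) = k + 1)"
proof -
  have "0 < t 1"
    using assms(1) unfolding toeplitz_params_def by simp
  have "interval_graph {1..n} (toeplitz_adj k t) \<Longrightarrow> chordal {1..n} (toeplitz_adj k t)"
    by (rule interval_graph_imp_chordal)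
  moreover have "chordal {1..n} (toeplitz_adj k t) \<Longrightarrow> \<forall>i\<in>{1..k}. t i = i * t 1"
    using not_arith_imp_toeplitz_hole[OF assms] unfolding chordal_def by blast
  moreover have "\<forall>i\<in>{1..k}. t i = i * t 1 \<Longrightarrow> interval_graph {1..n} (toeplitz_adj k t)"
    using \<open>0 < t 1\<close> by (rule arith_toeplitz_interval_graph)
  ultimately show ?thesis
    using toeplitz_clique_number_eq_iff[OF assms(1)] by blast
qed

end
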